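(* In the algebra $\mathcal O_q$ defined in the context, the following relations hold for all integers $k\ge1$: $[\tilde{\mathcal G}_{k+1},\mathcal W_0]=\dfrac{[\mathcal W_0,[\mathcal W_0,[\mathcal W_1,\tilde{\mathcal G}_k]_q]_q]}{(q^2-q^{-2})^2}$ and $[\mathcal W_1,\tilde{\mathcal G}_{k+1}]=\dfrac{[[[\tilde{\mathcal G}_k,\mathcal W_0]_q,\mathcal W_1]_q,\mathcal W_1]}{(q^2-q^{-2})^2}$.
   Context: All algebras are associative and unital over a field $\mathbb F$; $q\in\mathbb F$ is nonzero and not a root of unity. For elements $X,Y$ of an algebra, $[X,Y]=XY-YX$ and $[X,Y]_q=qXY-q^{-1}YX$. Let $\rho=-(q^2-q^{-2})^2$. The algebra $\mathcal O_q$ is defined by generators $\mathcal W_{-k},\mathcal W_{k+1},\mathcal G_{k+1},\tilde{\mathcal G}_{k+1}$ ($k\in\mathbb N$) and the following relations for all $k,\ell\in\mathbb N$: $[\mathcal W_0,\mathcal W_{k+1}]=[\mathcal W_{-k},\mathcal W_1]=(\tilde{\mathcal G}_{k+1}-\mathcal G_{k+1})/(q+q^{-1})$; $[\mathcal W_0,\mathcal G_{k+1}]_q=[\tilde{\mathcal G}_{k+1},\mathcal W_0]_q=\rho\mathcal W_{-k-1}-\rho\mathcal W_{k+1}$; $[\mathcal G_{k+1},\mathcal W_1]_q=[\mathcal W_1,\tilde{\mathcal G}_{k+1}]_q=\rho\mathcal W_{k+2}-\rho\mathcal W_{-k}$; $[\mathcal W_{-k},\mathcal W_{-\ell}]=0$,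 $[\mathcal W_{k+1},\mathcal W_{\ell+1}]=0$; $[\mathcal W_{-k},\mathcal W_{\ell+1}]+[\mathcal W_{k+1},\mathcal W_{-\ell}]=0$; $[\mathcal W_{-k},\mathcal G_{\ell+1}]+[\mathcal G_{k+1},\mathcal W_{-\ell}]=0$; $[\mathcal W_{-k},\tilde{\mathcal G}_{\ell+1}]+[\tilde{\mathcal G}_{k+1},\mathcal W_{-\ell}]=0$; $[\mathcal W_{k+1},\mathcal G_{\ell+1}]+[\mathcal G_{k+1},\mathcal W_{\ell+1}]=0$; $[\mathcal W_{k+1},\tilde{\mathcal G}_{\ell+1}]+[\tilde{\mathcal G}_{k+1},\mathcal W_{\ell+1}]=0$; $[\mathcal G_{k+1},\mathcal G_{\ell+1}]=0$, $[\tilde{\mathcal G}_{k+1},\tilde{\mathcal G}_{\ell+1}]=0$; $[\tilde{\mathcal G}_{k+1},\mathcal G_{\ell+1}]+[\mathcal G_{k+1},\tilde{\mathcal G}_{\ell+1}]=0$. *)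

theory Defs
  imports Main
begin

text \<open>An associative unital algebra over a field 'k is a ring 'a together with a
  unital ring homomorphism from 'k into the centre of 'a (the structure map);
  scalar multiplication c.x is then (sm c * x).\<close>

definition alg_structure_map :: "('k::field \<Rightarrow> 'a::ring_1) \<Rightarrow> bool" where
  "alg_structure_map sm \<longleftrightarrow>
     (\<forall>a b. sm (a + b) = sm a + sm b) \<and>
     (\<forall>a b. sm (a * b) = sm a * sm b) \<and>
     sm 1 = 1 \<and>
     (\<forall>c x. sm c * x = x * sm c)"

definition comm :: "'a::ring \<Rightarrow> 'a \<Rightarrow> 'a" where
  "comm X Y = X * Y - Y * X"

definition qcomm :: "('k::field \<Rightarrow> 'a::ring_1) \<Rightarrow> 'k \<Rightarrow> 'a \<Rightarrow> 'a \<Rightarrow> 'a" where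
  "qcomm sm q X Y = sm q * X * Y - sm (inverse q) * Y * X"

definition rho :: "'k::field \<Rightarrow> 'k" where
  "rho q = - ((q^2 - inverse (q^2))^2)"

text \<open>Defining relations of O_q, for elements W (indexed by all integers:
  W j stands for \<W>_j), G j = \<G>_j and Gt j = \<tilde>\<G>_j (only indices j \<ge> 1 matter).\<close>
definition Oq_relations ::
  "('k::field \<Rightarrow> 'a::ring_1) \<Rightarrow> 'k \<Rightarrow> (int \<Rightarrow> 'a) \<Rightarrow> (nat \<Rightarrow> 'a) \<Rightarrow> (nat \<Rightarrow> 'a) \<Rightarrow> bool" where
  "Oq_relations sm q W G Gt \<longleftrightarrow>
   (\<forall>k l :: nat.
      comm (W 0) (W (int k + 1)) = sm (inverse (q + inverse q)) * (Gt (k+1) - G (k+1)) \<and>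
      comm (W (- int k)) (W 1) = sm (inverse (q + inverse q)) * (Gt (k+1) - G (k+1)) \<and>
      qcomm sm q (W 0) (G (k+1)) = sm (rho q) * W (- int k - 1) - sm (rho q) * W (int k + 1) \<and>
      qcomm sm q (Gt (k+1)) (W 0) = sm (rho q) * W (- int k - 1) - sm (rho q) * W (int k + 1) \<and>
      qcomm sm q (G (k+1)) (W 1) = sm (rho q) * W (int k + 2) - sm (rho q) * W (- int k) \<and>
      qcomm sm q (W 1) (Gt (k+1)) = sm (rho q) * W (int k + 2) - sm (rho q) * W (- int k) \<and>
      comm (W (- int k)) (W (- int l)) = 0 \<and>
      comm (W (int k + 1)) (W (int l + 1)) = 0 \<and>
      comm (W (- int k)) (W (int l + 1)) + comm (W (int k + 1)) (W (- int l)) = 0 \<and>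
      comm (W (- int k)) (G (l+1)) + comm (G (k+1)) (W (- int l)) = 0 \<and>
      comm (W (- int k)) (Gt (l+1)) + comm (Gt (k+1)) (W (- int l)) = 0 \<and>
      comm (W (int k + 1)) (G (l+1)) + comm (G (k+1)) (W (int l + 1)) = 0 \<and>
      comm (W (int k + 1)) (Gt (l+1)) + comm (Gt (k+1)) (W (int l + 1)) = 0 \<and>
      comm (G (k+1)) (G (l+1)) = 0 \<and>
      comm (Gt (k+1)) (Gt (l+1)) = 0 \<and>
      comm (Gt (k+1)) (G (l+1)) + comm (G (k+1)) (Gt (l+1)) = 0)"

end

theory Submission
  imports Defs
begin

(* Write k = m + 1. The defining relations give [W_1, Gt_(m+1)]_q = rho (W_(m+2) - W_(-m)).
   The derivation [W_0, -] commutes with [W_0, -]_q and W_0 commutes with W_(-m), so the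
   outer commutator kills the second term. For the first, [W_0, W_(m+2)] = (Gt_(m+2) - G_(m+2))/(q + q^-1)
   and [W_0, G_(m+2)]_q = [Gt_(m+2), W_0]_q combine to [W_0, [W_0, W_(m+2)]_q] = [W_0, Gt_(m+2)].
   As (q^2 - q^-2)^2 = -rho, this is the first relation; the second is its mirror image under
   W_0 <-> W_1 with all products reversed. *)

lemma plus_inverse_nonzero:
  fixes q :: "'k::field"
  assumes "q \<noteq> 0" and "q ^ 4 \<noteq> 1"
  shows "q + inverse q \<noteq> 0"
proof
  assume "q + inverse q = 0"
  then have "q\<^sup>2 + 1 = 0"
    using assms(1) by (simp add: power2_eq_square field_simps)
  then have "q\<^sup>2 = -1"
    by (simp add: eq_neg_iff_add_eq_0)
  then have "q\<^sup>2 * q\<^sup>2 = 1"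
    by simp
  then have "q ^ 4 = 1"
    by (simp flip: power_add)
  with assms(2) show False ..
qed

lemma square_minus_inverse_square_nonzero:
  fixes q :: "'k::field"
  assumes "q \<noteq> 0" and "q ^ 4 \<noteq> 1"
  shows "q\<^sup>2 - inverse (q\<^sup>2) \<noteq> 0"
proof
  assume "q\<^sup>2 - inverse (q\<^sup>2) = 0"
  then have "q\<^sup>2 * q\<^sup>2 = 1"
    using assms(1) by (simp add: field_simps)
  then have "q ^ 4 = 1"
    by (simp flip: power_add)
  with assms(2) show False ..
qed

lemma comm_diff_right: "comm a (x - y) = comm a x - comm a y"
  unfolding comm_def by (simp add: algebra_simps)

lemma comm_diff_left: "comm (x - y) b = comm x b - comm y b"
  unfolding comm_def by (simp add: algebra_simps)

lemma comm_anticommute: "comm a b = - comm b a"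
  unfolding comm_def by simp

lemma qcomm_diff_right: "qcomm sm q a (x - y) = qcomm sm q a x - qcomm sm q a y"
  unfolding qcomm_def by (simp add: algebra_simps)

lemma qcomm_diff_left: "qcomm sm q (x - y) b = qcomm sm q x b - qcomm sm q y b"
  unfolding qcomm_def by (simp add: algebra_simps)

lemma qcomm_zero_right [simp]: "qcomm sm q a 0 = 0"
  unfolding qcomm_def by simp

lemma qcomm_zero_left [simp]: "qcomm sm q 0 b = 0"
  unfolding qcomm_def by simp

lemma qcomm_minus_qcomm_swap:
  "qcomm sm q a x - qcomm sm q x a = (sm q + sm (inverse q)) * comm a x"
  unfolding qcomm_def comm_def by (simp add: algebra_simps)

locale central_scalars =
  fixes sm :: "'k::field \<Rightarrow> 'a::ring_1"
  assumes structure_map: "alg_structure_map sm"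
begin

lemma add: "sm (a + b) = sm a + sm b"
  using structure_map unfolding alg_structure_map_def by blast

lemma mult: "sm (a * b) = sm a * sm b"
  using structure_map unfolding alg_structure_map_def by blast

lemma one: "sm 1 = 1"
  using structure_map unfolding alg_structure_map_def by blast

lemma central: "sm c * x = x * sm c"
  using structure_map unfolding alg_structure_map_def by blast

lemma minus: "sm (- a) = - sm a"
proof -
  have "sm 0 = 0"
    using add[of 0 0] by simp
  then have "sm (- a) + sm a = 0"
    using add[of "- a" a] by simp
  then show ?thesis
    by (simp add: eq_neg_iff_add_eq_0)
qed

lemma inverse_cancel: "c \<noteq> 0 \<Longrightarrow> sm (inverse c) * (sm c * x) = x"
  by (simp flip: mult.assoc mult add: one)

(* As a simp rule this loops on products of two scalars, so it is only used instantiated. *)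
lemma mult_scale_right: "y * (sm c * x) = sm c * (y * x)"
  by (metis central mult.assoc)

lemma scale_left_commute: "sm a * (sm b * x) = sm b * (sm a * x)"
  by (metis mult_scale_right)

lemma comm_scale_right: "comm y (sm c * x) = sm c * comm y x"
  unfolding comm_def by (simp add: mult_scale_right[of y] mult.assoc right_diff_distrib)

lemma comm_scale_left: "comm (sm c * x) y = sm c * comm x y"
  unfolding comm_def by (simp add: mult_scale_right[of y] mult.assoc right_diff_distrib)

lemma qcomm_scale_right: "qcomm sm q y (sm c * x) = sm c * qcomm sm q y x"
  unfolding qcomm_def
  by (simp add: mult_scale_right[of y] scale_left_commute mult.assoc right_diff_distrib)

lemma qcomm_scale_left: "qcomm sm q (sm c * x) y = sm c * qcomm sm q x y"
  unfolding qcomm_def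
  by (simp add: mult_scale_right[of y] scale_left_commute mult.assoc right_diff_distrib)

lemma comm_qcomm_same_left: "comm a (qcomm sm q a x) = qcomm sm q a (comm a x)"
  unfolding qcomm_def comm_def by (simp add: mult_scale_right[of a] algebra_simps)

lemma comm_qcomm_same_right: "comm (qcomm sm q x b) b = qcomm sm q (comm x b) b"
  unfolding qcomm_def comm_def by (simp add: mult_scale_right[of b] algebra_simps)

end

lemma Oq_qcomm_W0_G_eq_qcomm_Gt_W0:
  assumes "Oq_relations sm q W G Gt"
  shows "qcomm sm q (W 0) (G (k + 1)) = qcomm sm q (Gt (k + 1)) (W 0)"
  using assms[unfolded Oq_relations_def, rule_format, of k 0] by (elim conjE) (simp only:)

lemma Oq_qcomm_G_W1_eq_qcomm_W1_Gt:
  assumes "Oq_relations sm q W G Gt"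
  shows "qcomm sm q (G (k + 1)) (W 1) = qcomm sm q (W 1) (Gt (k + 1))"
  using assms[unfolded Oq_relations_def, rule_format, of k 0] by (elim conjE) (simp only:)

context central_scalars
begin

lemma inverse_rho_cancel:
  assumes "q\<^sup>2 - inverse (q\<^sup>2) \<noteq> 0"
  shows "sm (inverse ((q\<^sup>2 - inverse (q\<^sup>2))\<^sup>2)) * (sm (rho q) * x) = - x"
  using inverse_cancel[of "(q\<^sup>2 - inverse (q\<^sup>2))\<^sup>2" x] assms
  by (simp add: rho_def minus)

lemma comm_qcomm_same_left_eq:
  assumes "q + inverse q \<noteq> 0"
    and "comm a u = sm (inverse (q + inverse q)) * (x - y)"
    and "qcomm sm q a y = qcomm sm q x a"
  shows "comm a (qcomm sm q a u) = comm a x"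
proof -
  have "comm a (qcomm sm q a u) = sm (inverse (q + inverse q)) * (qcomm sm q a x - qcomm sm q x a)"
    by (simp add: comm_qcomm_same_left assms(2,3) qcomm_scale_right qcomm_diff_right)
  also have "\<dots> = sm (inverse (q + inverse q)) * (sm (q + inverse q) * comm a x)"
    by (simp add: qcomm_minus_qcomm_swap add)
  finally show ?thesis
    using inverse_cancel assms(1) by simp
qed

lemma comm_qcomm_same_right_eq:
  assumes "q + inverse q \<noteq> 0"
    and "comm u b = sm (inverse (q + inverse q)) * (x - y)"
    and "qcomm sm q y b = qcomm sm q b x"
  shows "comm (qcomm sm q u b) b = comm x b"
proof -
  have "comm (qcomm sm q u b) b = sm (inverse (q + inverse q)) * (qcomm sm q x b - qcomm sm q b x)"
    by (simp add: comm_qcomm_same_right assms(2,3) qcomm_scale_left qcomm_diff_left)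
  also have "\<dots> = sm (inverse (q + inverse q)) * (sm (q + inverse q) * comm x b)"
    by (simp add: qcomm_minus_qcomm_swap add)
  finally show ?thesis
    using inverse_cancel assms(1) by simp
qed

lemma Oq_comm_W0_qcomm_W0_qcomm_W1_Gt:
  assumes "q + inverse q \<noteq> 0" and "Oq_relations sm q W G Gt"
  shows "comm (W 0) (qcomm sm q (W 0) (qcomm sm q (W 1) (Gt (k + 1)))) =
           sm (rho q) * comm (W 0) (Gt (k + 2))"
proof -
  note R = assms(2)[unfolded Oq_relations_def, rule_format]
  have index: "int (k + 1) + 1 = int k + 2" "k + 1 + 1 = k + 2"
    by simp_all
  have "comm (W 0) (qcomm sm q (W 0) (W (int k + 2))) = comm (W 0) (Gt (k + 2))"
  proof (rule comm_qcomm_same_left_eq[OF assms(1)])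
    show "comm (W 0) (W (int k + 2)) = sm (inverse (q + inverse q)) * (Gt (k + 2) - G (k + 2))"
      using R[of "k + 1" 0, unfolded index] by blast
    show "qcomm sm q (W 0) (G (k + 2)) = qcomm sm q (Gt (k + 2)) (W 0)"
      using Oq_qcomm_W0_G_eq_qcomm_Gt_W0[OF assms(2), of "k + 1", unfolded index] .
  qed
  moreover have "comm (W 0) (qcomm sm q (W 0) (W (- int k))) = 0"
    using R[of 0 k] by (simp add: comm_qcomm_same_left)
  moreover have "qcomm sm q (W 1) (Gt (k + 1)) = sm (rho q) * (W (int k + 2) - W (- int k))"
    using R[of k 0] by (simp add: right_diff_distrib)
  ultimately show ?thesis
    by (simp only: qcomm_scale_right qcomm_diff_right comm_scale_right comm_diff_right diff_zero)
qed

lemma Oq_comm_qcomm_qcomm_Gt_W0_W1_W1: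
  assumes "q + inverse q \<noteq> 0" and "Oq_relations sm q W G Gt"
  shows "comm (qcomm sm q (qcomm sm q (Gt (k + 1)) (W 0)) (W 1)) (W 1) =
           sm (rho q) * comm (Gt (k + 2)) (W 1)"
proof -
  note R = assms(2)[unfolded Oq_relations_def, rule_format]
  have index: "- int (k + 1) = - int k - 1" "k + 1 + 1 = k + 2"
    by simp_all
  have "comm (qcomm sm q (W (- int k - 1)) (W 1)) (W 1) = comm (Gt (k + 2)) (W 1)"
  proof (rule comm_qcomm_same_right_eq[OF assms(1)])
    show "comm (W (- int k - 1)) (W 1) = sm (inverse (q + inverse q)) * (Gt (k + 2) - G (k + 2))"
      using R[of "k + 1" 0, unfolded index] by blast
    show "qcomm sm q (G (k + 2)) (W 1) = qcomm sm q (W 1) (Gt (k + 2))"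
      using Oq_qcomm_G_W1_eq_qcomm_W1_Gt[OF assms(2), of "k + 1", unfolded index] .
  qed
  moreover have "comm (qcomm sm q (W (int k + 1)) (W 1)) (W 1) = 0"
    using R[of k 0] by (simp add: comm_qcomm_same_right)
  moreover have "qcomm sm q (Gt (k + 1)) (W 0) = sm (rho q) * (W (- int k - 1) - W (int k + 1))"
    using R[of k 0] by (simp add: right_diff_distrib)
  ultimately show ?thesis
    by (simp only: qcomm_scale_left qcomm_diff_left comm_scale_left comm_diff_left diff_zero)
qed

end

theorem lemma6p1:
  fixes sm :: "'k::field \<Rightarrow> 'a::ring_1"
    and q :: 'k
    and W :: "int \<Rightarrow> 'a" and G Gt :: "nat \<Rightarrow> 'a"
  assumes "alg_structure_map sm"
    and "q \<noteq> 0"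
    and "\<forall>n::nat. n > 0 \<longrightarrow> q ^ n \<noteq> 1"
    and "Oq_relations sm q W G Gt"
    and "k \<ge> 1"
  shows "comm (Gt (k+1)) (W 0) =
           sm (inverse ((q^2 - inverse (q^2))^2)) *
             comm (W 0) (qcomm sm q (W 0) (qcomm sm q (W 1) (Gt k))) \<and>
         comm (W 1) (Gt (k+1)) =
           sm (inverse ((q^2 - inverse (q^2))^2)) *
             comm (qcomm sm q (qcomm sm q (Gt k) (W 0)) (W 1)) (W 1)"
proof -
  interpret central_scalars sm
    by (rule central_scalars.intro) (fact assms(1))
  have "q ^ 4 \<noteq> 1"
    using assms(3) by simp
  then have q_plus: "q + inverse q \<noteq> 0" and q_minus: "q\<^sup>2 - inverse (q\<^sup>2) \<noteq> 0"
    using assms(2) plus_inverse_nonzero square_minus_inverse_square_nonzero by blast+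
  obtain m where k: "k = m + 1"
    using assms(5) by (metis add.commute le_add_diff_inverse)
  then have k_succ: "k + 1 = m + 2"
    by simp
  have "comm (Gt (m + 2)) (W 0) =
          sm (inverse ((q\<^sup>2 - inverse (q\<^sup>2))\<^sup>2)) *
            comm (W 0) (qcomm sm q (W 0) (qcomm sm q (W 1) (Gt (m + 1))))"
    unfolding Oq_comm_W0_qcomm_W0_qcomm_W1_Gt[OF q_plus assms(4)] inverse_rho_cancel[OF q_minus]
    by (rule comm_anticommute)
  moreover have "comm (W 1) (Gt (m + 2)) =
          sm (inverse ((q\<^sup>2 - inverse (q\<^sup>2))\<^sup>2)) *
            comm (qcomm sm q (qcomm sm q (Gt (m + 1)) (W 0)) (W 1)) (W 1)"
    unfolding Oq_comm_qcomm_qcomm_Gt_W0_W1_W1[OF q_plus assms(4)] inverse_rho_cancel[OF q_minus]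
    by (rule comm_anticommute)
  ultimately show ?thesis
    unfolding k_succ unfolding k by blast
qed

end
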